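(* For any program $\Omega$ with weight constraints, the nondisjunctive translation $[\Omega]^{nd}$ is strongly equivalent to the translation $[\Omega]$.
   Context: Programs with nested expressions. A literal is a propositional atom $a$ or its classical negation $\neg a$; a set of literals is consistent if it contains no pair $a,\neg a$. Elementary formulas are literals, $\bot$ and $\top$. Formulas are built from elementary formulas using the unary connective $\mathit{not}$ and the binary connectives "," (conjunction) and ";" (disjunction). A rule with nested expressions has the form $\mathit{Head}\leftarrow \mathit{Body}$ with formulas $\mathit{Head},\mathit{Body}$; a program with nested expressions is a set of such rules. For a consistent set $Z$ of literals: $Z\models l$ iff $l\in Z$; $Z\models\top$; $Z\not\models\bot$; $Z\models(F,G)$ iff both; $Z\models(F;G)$ iff at least one; $Z\models \mathit{not}\,F$ iff $Z\not\models F$. $Z$ satisfies a program if for every rule, $Z\models\mathit{Body}$ implies $Z\models\mathit{Head}$. The reduct $F^Z$: $F^Z=F$ for elementary $F$; $(F,G)^Z=F^Z,G^Z$; $(F;G)^Z=F^Z;G^Z$; $(\mathit{not}\,F)^Z=\bot$ if $Z\models F$ and $\top$ otherwise; $\Pi^Z$ consists of the rules $\mathit{Head}^Z\leftarrow\mathit{Body}^Z$. $Z$ is an answer set of a program without $\mathit{not}$ if it is a minimal consistent set of literals satisfying it, and of an arbitrary $\Pi$ if it is an answer set of $\Pi^Z$. Programs $\Pi_1,\Pi_2$ are strongly equivalent if for every program $\Pi$ with nested expressions, $\Pi_1\cup\Pi$ and $\Pi_2\cup\Pi$ have the same answer sets. Abbreviation: $\langle F_1,\dots,F_n\rangle:X$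 (for $X$ a set of subsets of $\{1,\dots,n\}$) is the disjunction over $I\in X$ of the conjunctions of $F_i$, $i\in I$ (empty conjunction $\top$, empty disjunction $\bot$). Weight constraints. A rule element is a literal $l$ (positive) or $\mathit{not}\ l$ (negative). A weight constraint is $L\le\{c_1=w_1,\dots,c_m=w_m\}\le U$ with $L,U$ reals or $\pm\infty$, rule elements $c_i$ ($m\ge0$), nonnegative real weights $w_i$. A rule with weight constraints is $C_0\leftarrow C_1,\dots,C_n$ ($n\ge 0$) with weight constraints $C_i$; the rule elements of $C_0$ are its head elements; a program with weight constraints is a set of such rules. Translations. For $S=\{c_1=w_1,\dots,c_m=w_m\}$ and real $w$: $[w\le S]=\langle c_1,\dots,c_m\rangle:\{I\subseteq\{1,\dots,m\}: w\le\sum_{i\in I}w_i\}$, $[w<S]=\langle c_1,\dots,c_m\rangle:\{I: w<\sum_{i\in I}w_i\}$, $[S\le U]=\mathit{not}\,[U<S]$, $[L\le S\le U]=[L\le S],[S\le U]$. $[\Omega]$ replaces each rule $C_0\leftarrow C_1,\dots,C_n$ with $(l_1;\mathit{not}\,l_1),\dots,(l_p;\mathit{not}\,l_p),[C_0]\leftarrow[C_1],\dots,[C_n]$, where $l_1,\dots,l_p$ are the positive head elements of the rule. $[\Omega]^{nd}$ replaces each such rule with the $p+1$ rules $l_j\leftarrow\mathit{not}\,\mathit{not}\,l_j,[C_1],\dots,[C_n]$ ($1\le j\le p$) and $\bot\leftarrow\mathit{not}\,[C_0],[C_1],\dots,[C_n]$. *)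

theory Defs
  imports Complex_Main "HOL-Library.Extended_Real"
begin

datatype 'a lit = Pos 'a | Neg 'a   (* atom a, classical negation \<not>a *)

datatype 'a fm =
    Lit "'a lit" | FBot | FTop
  | FNot "'a fm" | FConj "'a fm" "'a fm" | FDisj "'a fm" "'a fm"

type_synonym 'a nrule = "'a fm \<times> 'a fm"   (* (Head, Body) *)
type_synonym 'a nprog = "'a nrule set"

definition consistent :: "'a lit set \<Rightarrow> bool" where
  "consistent Z \<longleftrightarrow> (\<forall>a. \<not> (Pos a \<in> Z \<and> Neg a \<in> Z))"

fun models :: "'a lit set \<Rightarrow> 'a fm \<Rightarrow> bool" where
  "models Z (Lit l) = (l \<in> Z)"
| "models Z FTop = True"
| "models Z FBot = False"
| "models Z (FConj F G) = (models Z F \<and> models Z G)"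
| "models Z (FDisj F G) = (models Z F \<or> models Z G)"
| "models Z (FNot F) = (\<not> models Z F)"

definition satisfies :: "'a lit set \<Rightarrow> 'a nprog \<Rightarrow> bool" where
  "satisfies Z P \<longleftrightarrow> (\<forall>(h, b) \<in> P. models Z b \<longrightarrow> models Z h)"

fun reduct_fm :: "'a fm \<Rightarrow> 'a lit set \<Rightarrow> 'a fm" where
  "reduct_fm (Lit l) Z = Lit l"
| "reduct_fm FTop Z = FTop"
| "reduct_fm FBot Z = FBot"
| "reduct_fm (FConj F G) Z = FConj (reduct_fm F Z) (reduct_fm G Z)"
| "reduct_fm (FDisj F G) Z = FDisj (reduct_fm F Z) (reduct_fm G Z)"
| "reduct_fm (FNot F) Z = (if models Z F then FBot else FTop)"

definition reduct :: "'a nprog \<Rightarrow> 'a lit set \<Rightarrow> 'a nprog" where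
  "reduct P Z = (\<lambda>(h, b). (reduct_fm h Z, reduct_fm b Z)) ` P"

definition answer_set_pos :: "'a nprog \<Rightarrow> 'a lit set \<Rightarrow> bool" where
  "answer_set_pos P Z \<longleftrightarrow> consistent Z \<and> satisfies Z P \<and>
     (\<forall>Z'. Z' \<subset> Z \<and> consistent Z' \<longrightarrow> \<not> satisfies Z' P)"

definition answer_set :: "'a nprog \<Rightarrow> 'a lit set \<Rightarrow> bool" where
  "answer_set P Z \<longleftrightarrow> answer_set_pos (reduct P Z) Z"

definition strongly_equivalent :: "'a nprog \<Rightarrow> 'a nprog \<Rightarrow> bool" where
  "strongly_equivalent P1 P2 \<longleftrightarrow>
     (\<forall>P :: 'a nprog. \<forall>Z. answer_set (P1 \<union> P) Z \<longleftrightarrow> answer_set (P2 \<union> P) Z)"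

fun conj_list :: "'a fm list \<Rightarrow> 'a fm" where
  "conj_list [] = FTop"
| "conj_list [F] = F"
| "conj_list (F # Fs) = FConj F (conj_list Fs)"

fun disj_list :: "'a fm list \<Rightarrow> 'a fm" where
  "disj_list [] = FBot"
| "disj_list [F] = F"
| "disj_list (F # Fs) = FDisj F (disj_list Fs)"

datatype 'a relem = PosE "'a lit" | NegE "'a lit"   (* l  or  not l *)

record 'a wconstr =
  lower :: ereal
  elems :: "('a relem \<times> real) list"
  upper :: ereal

type_synonym 'a wrule = "'a wconstr \<times> 'a wconstr list"   (* C0 <- C1,...,Cn *)
type_synonym 'a wprog = "'a wrule set"

definition wc_nonneg :: "'a wconstr \<Rightarrow> bool" where
  "wc_nonneg C \<longleftrightarrow> (\<forall>(c, w) \<in> set (elems C). 0 \<le> w)"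

definition wprog_wf :: "'a wprog \<Rightarrow> bool" where
  "wprog_wf \<Omega> \<longleftrightarrow> (\<forall>(C0, Cs) \<in> \<Omega>. wc_nonneg C0 \<and> (\<forall>C \<in> set Cs. wc_nonneg C))"

fun tr_elem :: "'a relem \<Rightarrow> 'a fm" where
  "tr_elem (PosE l) = Lit l"
| "tr_elem (NegE l) = FNot (Lit l)"

text \<open>The abbreviation <F1,...,Fn>:X with X given by a predicate on index subsets
  (index lists are the increasing sublists of [0..<m]).\<close>
definition sel_disj :: "('a relem \<times> real) list \<Rightarrow> (real \<Rightarrow> bool) \<Rightarrow> 'a fm" where
  "sel_disj S cond =
     disj_list (map (\<lambda>I. conj_list (map (\<lambda>i. tr_elem (fst (S ! i))) I))
                (filter (\<lambda>I. cond (\<Sum>i\<leftarrow>I. snd (S ! i))) (subseqs [0..<length S])))"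

definition tr_geq :: "ereal \<Rightarrow> ('a relem \<times> real) list \<Rightarrow> 'a fm" where
  "tr_geq w S = sel_disj S (\<lambda>s. w \<le> ereal s)"

definition tr_gt :: "ereal \<Rightarrow> ('a relem \<times> real) list \<Rightarrow> 'a fm" where
  "tr_gt w S = sel_disj S (\<lambda>s. w < ereal s)"

definition tr_leq :: "('a relem \<times> real) list \<Rightarrow> ereal \<Rightarrow> 'a fm" where
  "tr_leq S U = FNot (tr_gt U S)"

definition tr_wc :: "'a wconstr \<Rightarrow> 'a fm" where
  "tr_wc C = FConj (tr_geq (lower C) (elems C)) (tr_leq (elems C) (upper C))"

definition pos_head :: "'a wconstr \<Rightarrow> 'a lit list" where
  "pos_head C = [l. PosE l \<leftarrow> map fst (elems C)]"

definition tr_rule :: "'a wrule \<Rightarrow> 'a nrule" where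
  "tr_rule r = (case r of (C0, Cs) \<Rightarrow>
     (conj_list (map (\<lambda>l. FDisj (Lit l) (FNot (Lit l))) (pos_head C0) @ [tr_wc C0]),
      conj_list (map tr_wc Cs)))"

definition tr_prog :: "'a wprog \<Rightarrow> 'a nprog" where
  "tr_prog \<Omega> = tr_rule ` \<Omega>"

definition tr_rule_nd :: "'a wrule \<Rightarrow> 'a nprog" where
  "tr_rule_nd r = (case r of (C0, Cs) \<Rightarrow>
     {(Lit l, conj_list (FNot (FNot (Lit l)) # map tr_wc Cs)) | l. l \<in> set (pos_head C0)}
     \<union> {(FBot, conj_list (FNot (tr_wc C0) # map tr_wc Cs))})"

definition tr_prog_nd :: "'a wprog \<Rightarrow> 'a nprog" where
  "tr_prog_nd \<Omega> = (\<Union>r\<in>\<Omega>. tr_rule_nd r)"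

end

theory Submission
  imports Defs
begin

text \<open>Answer sets of \<open>\<Pi>\<^sub>i \<union> \<Pi>\<close> depend on \<open>\<Pi>\<^sub>i\<close> only through the models \<open>X \<subseteq> Z\<close> of the
  reducts \<open>\<Pi>\<^sub>i\<^sup>Z\<close>, so it suffices to compare these rule by rule. When \<open>X\<close> satisfies the reduced
  body, the nondisjunctive rules demand that \<open>X\<close> and \<open>Z\<close> contain the same positive head
  elements and that \<open>Z \<Turnstile> [C\<^sub>0]\<close>; the reduced choice heads \<open>(l\<^sub>j; not l\<^sub>j)\<^sup>Z\<close> of \<open>[\<Omega>]\<close>
  demand the same agreement. Since the literals of \<open>[C\<^sub>0]\<close> outside the scope of \<open>not\<close> are
  positive head elements, under that agreement \<open>X \<Turnstile> [C\<^sub>0]\<^sup>Z\<close> holds iff \<open>Z \<Turnstile> [C\<^sub>0]\<close>.\<close>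

fun lits_outside_not :: "'a fm \<Rightarrow> 'a lit set" where
  "lits_outside_not (Lit l) = {l}"
| "lits_outside_not FTop = {}"
| "lits_outside_not FBot = {}"
| "lits_outside_not (FConj F G) = lits_outside_not F \<union> lits_outside_not G"
| "lits_outside_not (FDisj F G) = lits_outside_not F \<union> lits_outside_not G"
| "lits_outside_not (FNot F) = {}"

lemma models_conj_list: "models Z (conj_list Fs) \<longleftrightarrow> (\<forall>F\<in>set Fs. models Z F)"
  by (induction Fs rule: conj_list.induct) auto

lemma reduct_fm_conj_list: "reduct_fm (conj_list Fs) Z = conj_list (map (\<lambda>F. reduct_fm F Z) Fs)"
  by (induction Fs rule: conj_list.induct) auto

lemma lits_outside_not_conj_list: "lits_outside_not (conj_list Fs) \<subseteq> \<Union>(lits_outside_not ` set Fs)"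
  by (induction Fs rule: conj_list.induct) auto

lemma lits_outside_not_disj_list: "lits_outside_not (disj_list Fs) \<subseteq> \<Union>(lits_outside_not ` set Fs)"
  by (induction Fs rule: disj_list.induct) auto

lemma models_reduct_fm_iff_models:
  "\<forall>l\<in>lits_outside_not F. l \<in> X \<longleftrightarrow> l \<in> Z \<Longrightarrow> models X (reduct_fm F Z) \<longleftrightarrow> models Z F"
  by (induction F) auto

lemma lits_outside_not_sel_disj: "lits_outside_not (sel_disj S cond) \<subseteq> {l. PosE l \<in> fst ` set S}"
proof
  fix l assume "l \<in> lits_outside_not (sel_disj S cond)"
  then obtain I where I: "I \<in> set (subseqs [0..<length S])"
    and "l \<in> lits_outside_not (conj_list (map (\<lambda>i. tr_elem (fst (S ! i))) I))"
    using lits_outside_not_disj_list unfolding sel_disj_def by fastforce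
  then obtain i where i: "i \<in> set I" and l: "l \<in> lits_outside_not (tr_elem (fst (S ! i)))"
    using lits_outside_not_conj_list by fastforce
  have "set I \<in> set ` set (subseqs [0..<length S])"
    using I by blast
  then have "i < length S"
    using i subseqs_powset[of "[0..<length S]"] by auto
  moreover have "fst (S ! i) = PosE l"
    using l by (cases "fst (S ! i)") auto
  ultimately show "l \<in> {l. PosE l \<in> fst ` set S}"
    by (metis mem_Collect_eq nth_mem rev_image_eqI)
qed

lemma set_pos_head: "set (pos_head C) = {l. PosE l \<in> fst ` set (elems C)}"
proof -
  have "set [l. PosE l \<leftarrow> map fst ys] = {l. PosE l \<in> fst ` set ys}"
    for ys :: "('b relem \<times> real) list"
    by (induction ys) (auto split: relem.splits)
  then show ?thesis
    unfolding pos_head_def .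
qed

lemma lits_outside_not_tr_wc: "lits_outside_not (tr_wc C) \<subseteq> set (pos_head C)"
  using lits_outside_not_sel_disj[of "elems C" "\<lambda>s. lower C \<le> ereal s"]
  unfolding tr_wc_def tr_geq_def tr_leq_def set_pos_head by auto

lemma satisfies_reduct_iff:
  "satisfies X (reduct P Z) \<longleftrightarrow>
     (\<forall>(h, b)\<in>P. models X (reduct_fm b Z) \<longrightarrow> models X (reduct_fm h Z))"
  unfolding satisfies_def reduct_def by auto

lemma satisfies_reduct_Un:
  "satisfies X (reduct (P \<union> Q) Z) \<longleftrightarrow> satisfies X (reduct P Z) \<and> satisfies X (reduct Q Z)"
  unfolding satisfies_reduct_iff by blast

lemma satisfies_reduct_UN:
  "satisfies X (reduct (\<Union>i\<in>I. P i) Z) \<longleftrightarrow> (\<forall>i\<in>I. satisfies X (reduct (P i) Z))"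
  unfolding satisfies_reduct_iff by blast

lemma strongly_equivalentI:
  assumes "\<And>X Z. X \<subseteq> Z \<Longrightarrow> satisfies X (reduct P1 Z) \<longleftrightarrow> satisfies X (reduct P2 Z)"
  shows "strongly_equivalent P1 P2"
  unfolding strongly_equivalent_def answer_set_def answer_set_pos_def satisfies_reduct_Un
  using assms by (metis order_refl psubset_imp_subset)

lemma choice_head_reduct_iff:
  assumes "X \<subseteq> Z" and "lits_outside_not W \<subseteq> set H"
  shows "(\<forall>l\<in>set H. l \<in> Z \<longrightarrow> l \<in> X) \<and> models Z W \<longleftrightarrow>
         (\<forall>l\<in>set H. l \<in> X \<or> l \<notin> Z) \<and> models X (reduct_fm W Z)"
proof (cases "\<forall>l\<in>set H. l \<in> Z \<longrightarrow> l \<in> X")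
  case True
  then have "\<forall>l\<in>lits_outside_not W. l \<in> X \<longleftrightarrow> l \<in> Z"
    using assms by blast
  then show ?thesis
    using True models_reduct_fm_iff_models by blast
qed auto

lemma satisfies_reduct_tr_rule_nd_iff:
  assumes "X \<subseteq> Z"
  shows "satisfies X (reduct (tr_rule_nd r) Z) \<longleftrightarrow> satisfies X (reduct {tr_rule r} Z)"
proof -
  obtain C0 Cs where r: "r = (C0, Cs)"
    by fastforce
  define body where "body \<longleftrightarrow> (\<forall>C\<in>set Cs. models X (reduct_fm (tr_wc C) Z))"
  let ?H = "pos_head C0"
  have "tr_rule_nd r = (\<lambda>l. (Lit l, conj_list (FNot (FNot (Lit l)) # map tr_wc Cs))) ` set ?H
      \<union> {(FBot, conj_list (FNot (tr_wc C0) # map tr_wc Cs))}"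
    unfolding r tr_rule_nd_def by blast
  then have "satisfies X (reduct (tr_rule_nd r) Z) \<longleftrightarrow>
          (body \<longrightarrow> (\<forall>l\<in>set ?H. l \<in> Z \<longrightarrow> l \<in> X) \<and> models Z (tr_wc C0))"
    unfolding satisfies_reduct_iff body_def
    by (auto simp: reduct_fm_conj_list models_conj_list split: if_splits)
  also have "\<dots> \<longleftrightarrow>
          (body \<longrightarrow> (\<forall>l\<in>set ?H. l \<in> X \<or> l \<notin> Z) \<and> models X (reduct_fm (tr_wc C0) Z))"
    using choice_head_reduct_iff[OF assms lits_outside_not_tr_wc] by blast
  also have "\<dots> \<longleftrightarrow> satisfies X (reduct {tr_rule r} Z)"
    unfolding satisfies_reduct_iff r tr_rule_def body_def
    by (auto simp: reduct_fm_conj_list models_conj_list)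
  finally show ?thesis .
qed

theorem proposition2:
  fixes \<Omega> :: "'a wprog"
  assumes "wprog_wf \<Omega>"
  shows "strongly_equivalent (tr_prog_nd \<Omega>) (tr_prog \<Omega>)"
proof (rule strongly_equivalentI)
  fix X Z :: "'a lit set"
  assume "X \<subseteq> Z"
  have "tr_prog \<Omega> = (\<Union>r\<in>\<Omega>. {tr_rule r})"
    unfolding tr_prog_def by blast
  then show "satisfies X (reduct (tr_prog_nd \<Omega>) Z) \<longleftrightarrow> satisfies X (reduct (tr_prog \<Omega>) Z)"
    unfolding tr_prog_nd_def
    by (simp only: satisfies_reduct_UN satisfies_reduct_tr_rule_nd_iff[OF \<open>X \<subseteq> Z\<close>])
qed

end
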